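(* Let $\Phi$ be an Orlicz function and $p$ a lattice norm on $\mathbb{R}^2$ with $p((1,0))=p((0,1))=1$. If $x\in L^\Phi(\mu)$ satisfies $I_\Phi(\lambda x)=+\infty$ for every $\lambda>1$, then $$1\le \|x\|_{\Phi,p}\le 1+I_\Phi(x).$$
   Context: $(\Omega,\Sigma,\mu)$ is a $\sigma$-finite complete measure space, $L^0$ the space of (classes of a.e. equal) real measurable functions. An Orlicz function is a function $\Phi:\mathbb{R}\to[0,\infty)$ which is convex, even, vanishes at $0$ and is not identically zero. $I_\Phi(x)=\int_\Omega\Phi(x(t))\,d\mu\in[0,+\infty]$; $L^\Phi(\mu)=\{x\in L^0: I_\Phi(\lambda x)<\infty\text{ for some }\lambda>0\}$. A lattice norm on $\mathbb{R}^2$ is a norm $p$ with $p((u,v))\le p((u',v'))$ whenever $|u|\le|u'|,|v|\le|v'|$. For such $p$ with $p((1,0))=1$, $\|x\|_{\Phi,p}=\inf_{k>0}\frac1k p((1,I_\Phi(kx)))$ for $x\in L^\Phi(\mu)$, with the convention $p((1,+\infty))=+\infty$. *)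

theory Defs
  imports "HOL-Analysis.Analysis"
begin

definition orlicz_function :: "(real \<Rightarrow> real) \<Rightarrow> bool" where
  "orlicz_function \<Phi> \<longleftrightarrow> convex_on UNIV \<Phi> \<and> (\<forall>u. \<Phi> u \<ge> 0) \<and> (\<forall>u. \<Phi> (- u) = \<Phi> u)
     \<and> \<Phi> 0 = 0 \<and> (\<exists>u. \<Phi> u \<noteq> 0)"

definition orlicz_modular :: "'a measure \<Rightarrow> (real \<Rightarrow> real) \<Rightarrow> ('a \<Rightarrow> real) \<Rightarrow> ennreal" where
  "orlicz_modular M \<Phi> x = (\<integral>\<^sup>+ t. ennreal (\<Phi> (x t)) \<partial>M)"

definition orlicz_space :: "'a measure \<Rightarrow> (real \<Rightarrow> real) \<Rightarrow> ('a \<Rightarrow> real) set" where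
  "orlicz_space M \<Phi> = {x \<in> borel_measurable M. \<exists>c>0. orlicz_modular M \<Phi> (\<lambda>t. c * x t) < \<infinity>}"

definition is_norm2 :: "(real \<times> real \<Rightarrow> real) \<Rightarrow> bool" where
  "is_norm2 p \<longleftrightarrow> (\<forall>v. p v \<ge> 0) \<and> (\<forall>v. p v = 0 \<longleftrightarrow> v = (0, 0))
     \<and> (\<forall>a u v. p (a * u, a * v) = \<bar>a\<bar> * p (u, v))
     \<and> (\<forall>u v u' v'. p (u + u', v + v') \<le> p (u, v) + p (u', v'))"

definition lattice_norm2 :: "(real \<times> real \<Rightarrow> real) \<Rightarrow> bool" where
  "lattice_norm2 p \<longleftrightarrow> is_norm2 p \<and>
     (\<forall>u v u' v'. \<bar>u\<bar> \<le> \<bar>u'\<bar> \<longrightarrow> \<bar>v\<bar> \<le> \<bar>v'\<bar> \<longrightarrow> p (u, v) \<le> p (u', v'))"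

definition p_ext :: "(real \<times> real \<Rightarrow> real) \<Rightarrow> ennreal \<Rightarrow> ennreal" where
  "p_ext p s = (if s = \<infinity> then \<infinity> else ennreal (p (1, enn2real s)))"

definition orlicz_p_norm ::
  "'a measure \<Rightarrow> (real \<Rightarrow> real) \<Rightarrow> (real \<times> real \<Rightarrow> real) \<Rightarrow> ('a \<Rightarrow> real) \<Rightarrow> ennreal" where
  "orlicz_p_norm M \<Phi> p x =
     (INF k\<in>{0<..}. ennreal (1 / k) * p_ext p (orlicz_modular M \<Phi> (\<lambda>t. k * x t)))"

end

theory Submission
  imports Defs
begin

text \<open>The lower bound: for k \<le> 1 the factor 1/k is at least 1 and p((1,s)) \<ge> p((1,0)) = 1 by
  monotonicity, while for k > 1 the modular, hence the whole term, is infinite.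
  The upper bound: take k = 1 and use p((1,s)) \<le> p((1,0)) + s p((0,1)).\<close>

lemma lattice_norm2_mono:
  assumes "lattice_norm2 p" and "\<bar>u\<bar> \<le> \<bar>u'\<bar>" and "\<bar>v\<bar> \<le> \<bar>v'\<bar>"
  shows "p (u, v) \<le> p (u', v')"
  using assms unfolding lattice_norm2_def by blast

lemma is_norm2_le_axes:
  assumes "is_norm2 p"
  shows "p (u, v) \<le> \<bar>u\<bar> * p (1, 0) + \<bar>v\<bar> * p (0, 1)"
proof -
  have hom: "\<And>a u v. p (a * u, a * v) = \<bar>a\<bar> * p (u, v)"
    and tri: "\<And>u v u' v'. p (u + u', v + v') \<le> p (u, v) + p (u', v')"
    using assms unfolding is_norm2_def by blast+
  have "p (u, v) \<le> p (u * 1, u * 0) + p (v * 0, v * 1)"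
    using tri[of "u * 1" "v * 0" "u * 0" "v * 1"] by simp
  then show ?thesis by (simp only: hom)
qed

lemma one_le_p_ext:
  assumes "lattice_norm2 p" and "p (1, 0) = 1"
  shows "1 \<le> p_ext p s"
proof (cases "s = \<infinity>")
  case False
  have "p (1, 0) \<le> p (1, enn2real s)"
    by (rule lattice_norm2_mono[OF assms(1)]) auto
  with False assms(2) show ?thesis by (simp add: p_ext_def)
qed (simp add: p_ext_def)

lemma p_ext_le_one_plus:
  assumes "is_norm2 p" and "p (1, 0) = 1" and "p (0, 1) = 1"
  shows "p_ext p s \<le> 1 + s"
proof (cases "s = \<infinity>")
  case False
  then obtain r where s: "s = ennreal r" and r: "r \<ge> 0"
    by (cases s) auto
  have "p (1, r) \<le> 1 + r"
    using is_norm2_le_axes[OF assms(1), of 1 r] assms(2,3) r by simp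
  then have "ennreal (p (1, r)) \<le> ennreal (1 + r)" by (rule ennreal_leI)
  with s r show ?thesis by (simp add: p_ext_def ennreal_plus)
qed simp

lemma one_le_orlicz_p_norm:
  assumes "lattice_norm2 p" and "p (1, 0) = 1"
    and "\<forall>c>1. orlicz_modular M \<Phi> (\<lambda>t. c * x t) = \<infinity>"
  shows "1 \<le> orlicz_p_norm M \<Phi> p x"
  unfolding orlicz_p_norm_def
proof (rule INF_greatest)
  fix k :: real
  assume "k \<in> {0<..}"
  then have k: "k > 0" by simp
  let ?s = "orlicz_modular M \<Phi> (\<lambda>t. k * x t)"
  show "1 \<le> ennreal (1 / k) * p_ext p ?s"
  proof (cases "k > 1")
    case True
    with assms(3) k show ?thesis by (simp add: p_ext_def ennreal_mult_top)
  next
    case False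
    with k have "1 \<le> ennreal (1 / k)" by simp
    moreover have "1 \<le> p_ext p ?s" by (rule one_le_p_ext[OF assms(1,2)])
    ultimately have "1 * 1 \<le> ennreal (1 / k) * p_ext p ?s" by (rule mult_mono) simp_all
    then show ?thesis by simp
  qed
qed

lemma orlicz_p_norm_le_p_ext_modular:
  "orlicz_p_norm M \<Phi> p x \<le> p_ext p (orlicz_modular M \<Phi> x)"
proof -
  have "orlicz_p_norm M \<Phi> p x \<le> ennreal (1 / 1) * p_ext p (orlicz_modular M \<Phi> (\<lambda>t. 1 * x t))"
    unfolding orlicz_p_norm_def by (rule INF_lower) simp
  then show ?thesis by simp
qed

theorem lemma2:
  fixes M :: "'a measure" and \<Phi> :: "real \<Rightarrow> real" and p :: "real \<times> real \<Rightarrow> real"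
    and x :: "'a \<Rightarrow> real"
  assumes "sigma_finite_measure M" and "complete_measure M"
    and "orlicz_function \<Phi>"
    and "lattice_norm2 p" and "p (1, 0) = 1" and "p (0, 1) = 1"
    and "x \<in> orlicz_space M \<Phi>"
    and "\<forall>c>1. orlicz_modular M \<Phi> (\<lambda>t. c * x t) = \<infinity>"
  shows "1 \<le> orlicz_p_norm M \<Phi> p x \<and> orlicz_p_norm M \<Phi> p x \<le> 1 + orlicz_modular M \<Phi> x"
proof
  show "1 \<le> orlicz_p_norm M \<Phi> p x"
    using one_le_orlicz_p_norm assms(4,5,8) .
  have "is_norm2 p"
    using assms(4) unfolding lattice_norm2_def by blast
  then show "orlicz_p_norm M \<Phi> p x \<le> 1 + orlicz_modular M \<Phi> x"
    using orlicz_p_norm_le_p_ext_modular p_ext_le_one_plus assms(5,6) order_trans by blast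
qed

end
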